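(* Let $(X_0,\langle\cdot,\cdot\rangle_0)$ be a Hilbert space with orthonormal basis $\{e_i\}_{i=1}^\infty$. Let numbers $a_{i,s}$ ($i,s\in\mathbb N$) satisfy $1\le a_{i,s}\le a_{i,s+1}$ for all $i,s$, and for $s\in\mathbb N$ define $$X_s:=\{f\in X_0: \{a_{i,s}\langle f,e_i\rangle_0\}_{i=1}^\infty\in\ell^2\},\qquad \langle f,h\rangle_s:=\sum_{i=1}^\infty a_{i,s}^2\langle f,e_i\rangle_0\langle e_i,h\rangle_0 .$$ Let $k_1<k_2<\cdots$ be positive integers and $t_i\in\mathbb R\setminus\{0\}$, and define $g_i\in X_0^*$ by $g_i(f):=t_i\langle f,e_1\rangle_0$ for $i=1,\dots,k_1$ and $g_i(f):=t_i\langle f,e_j\rangle_0$ for $i=k_{j-1}+1,\dots,k_j$, $j\ge2$. For $s\in\mathbb N_0$ and a scalar sequence $c=\{c_i\}$ let $M^c_s:=\{f\in X_s:|c_i|\le|g_i(f)|\ \forall i\}$, $\Theta_s:=\{c:M^c_s\ne\varnothing\}$ with $\|c\|_s:=\inf\{\|f\|_s: f\in M^c_s\}$, and let $X_F:=\bigcap_s X_s$, $\Theta_F:=\bigcap_s\Theta_s$. Then $\{X_s\}_{s\in\mathbb N_0}$ is a sequence of Hilbert spaces with $\{0\}\ne X_F\subseteq\cdots\subseteq X_1\subseteq X_0$, $\|\cdot\|_0\le\|\cdot\|_1\le\cdots$ and $X_F$ dense in every $X_s$; $\{\Theta_s\}_{s\in\mathbb N_0}$ is a sequence of $CB$-spaces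 with $\{0\}\ne\Theta_F\subseteq\cdots\subseteq\Theta_1\subseteq\Theta_0$, $\|\cdot\|_0\le\|\cdot\|_1\le\cdots$ and $\Theta_F$ dense in every $\Theta_s$; and $\{g_i|_{X_F}\}$ is a tight $F$-frame for $X_F$ with respect to $\Theta_F$.
   Context: A $CB$-space is a Banach sequence space with continuous coordinate functionals in which the canonical unit vectors form a Schauder basis. For nested Banach spaces $X_s$ and nested such sequence spaces $\Theta_s$ (intersections nonzero and dense, norms increasing in $s$) with $X_F=\bigcap X_s$, $\Theta_F=\bigcap\Theta_s$: $\{g_i\}\subset X_F^*$ is a pre-$F$-frame for $X_F$ with respect to $\Theta_F$ if $\{g_i(f)\}\in\Theta_F$ for all $f\in X_F$ and for each $s$ there are $0<A_s\le B_s$ with $A_s\|f\|_s\le\|\{g_i(f)\}\|_s\le B_s\|f\|_s$ for all $f\in X_F$; it is tight if $A_s=B_s$ for all $s$; it is an $F$-frame if in addition there is a linear operator $V:\Theta_F\to X_F$ which is $F$-bounded (for each $s$ there is $K_s$ with $\|Vc\|_s\le K_s\|c\|_s$ for all $c\in\Theta_F$) such that $V(\{g_i(f)\})=f$ for all $f\in X_F$. *)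

theory Defs
  imports "HOL-Analysis.Analysis"
begin

definition hilbert_on :: "'v::real_vector set \<Rightarrow> ('v \<Rightarrow> 'v \<Rightarrow> real) \<Rightarrow> bool" where
  "hilbert_on S ip \<longleftrightarrow>
     subspace S \<and>
     (\<forall>x\<in>S. \<forall>y\<in>S. ip x y = ip y x) \<and>
     (\<forall>x\<in>S. \<forall>y\<in>S. \<forall>z\<in>S. ip (x + y) z = ip x z + ip y z) \<and>
     (\<forall>x\<in>S. \<forall>y\<in>S. \<forall>r. ip (r *\<^sub>R x) y = r * ip x y) \<and>
     (\<forall>x\<in>S. 0 \<le> ip x x) \<and>
     (\<forall>x\<in>S. ip x x = 0 \<longrightarrow> x = 0) \<and>
     (\<forall>X. (\<forall>n. X n \<in> S) \<and>
          (\<forall>\<epsilon>>0. \<exists>N. \<forall>m\<ge>N. \<forall>n\<ge>N. sqrt (ip (X m - X n) (X m - X n)) < \<epsilon>) \<longrightarrow>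
          (\<exists>L\<in>S. (\<lambda>n. sqrt (ip (X n - L) (X n - L))) \<longlonglongrightarrow> 0))"

definition seq_add :: "(nat \<Rightarrow> real) \<Rightarrow> (nat \<Rightarrow> real) \<Rightarrow> (nat \<Rightarrow> real)" where
  "seq_add c d = (\<lambda>i. c i + d i)"
definition seq_diff :: "(nat \<Rightarrow> real) \<Rightarrow> (nat \<Rightarrow> real) \<Rightarrow> (nat \<Rightarrow> real)" where
  "seq_diff c d = (\<lambda>i. c i - d i)"
definition seq_scale :: "real \<Rightarrow> (nat \<Rightarrow> real) \<Rightarrow> (nat \<Rightarrow> real)" where
  "seq_scale r c = (\<lambda>i. r * c i)"
definition seq_zero :: "nat \<Rightarrow> real" where
  "seq_zero = (\<lambda>i. 0)"
definition unit_seq :: "nat \<Rightarrow> nat \<Rightarrow> real" where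
  "unit_seq j = (\<lambda>i. if i = j then 1 else 0)"
text \<open>Partial sums \<open>\<Sum>_{j<n} \<alpha>_j \<delta>_j\<close>.\<close>
definition seq_partial :: "(nat \<Rightarrow> real) \<Rightarrow> nat \<Rightarrow> nat \<Rightarrow> real" where
  "seq_partial \<alpha> n = (\<lambda>i. if i < n then \<alpha> i else 0)"

definition banach_seq_space :: "(nat \<Rightarrow> real) set \<Rightarrow> ((nat \<Rightarrow> real) \<Rightarrow> real) \<Rightarrow> bool" where
  "banach_seq_space \<Theta> nm \<longleftrightarrow>
     seq_zero \<in> \<Theta> \<and>
     (\<forall>c\<in>\<Theta>. \<forall>d\<in>\<Theta>. seq_add c d \<in> \<Theta>) \<and>
     (\<forall>c\<in>\<Theta>. \<forall>r. seq_scale r c \<in> \<Theta>) \<and>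
     (\<forall>c\<in>\<Theta>. 0 \<le> nm c) \<and>
     (\<forall>c\<in>\<Theta>. nm c = 0 \<longleftrightarrow> c = seq_zero) \<and>
     (\<forall>c\<in>\<Theta>. \<forall>r. nm (seq_scale r c) = \<bar>r\<bar> * nm c) \<and>
     (\<forall>c\<in>\<Theta>. \<forall>d\<in>\<Theta>. nm (seq_add c d) \<le> nm c + nm d) \<and>
     (\<forall>X. (\<forall>n. X n \<in> \<Theta>) \<and>
          (\<forall>\<epsilon>>0. \<exists>N. \<forall>m\<ge>N. \<forall>n\<ge>N. nm (seq_diff (X m) (X n)) < \<epsilon>) \<longrightarrow>
          (\<exists>L\<in>\<Theta>. (\<lambda>n. nm (seq_diff (X n) L)) \<longlonglongrightarrow> 0))"

text \<open>CB-space: Banach sequence space with continuous coordinate functionals in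
  which the canonical unit vectors form a Schauder basis.\<close>
definition cb_space :: "(nat \<Rightarrow> real) set \<Rightarrow> ((nat \<Rightarrow> real) \<Rightarrow> real) \<Rightarrow> bool" where
  "cb_space \<Theta> nm \<longleftrightarrow>
     banach_seq_space \<Theta> nm \<and>
     (\<forall>i. \<exists>C. \<forall>c\<in>\<Theta>. \<bar>c i\<bar> \<le> C * nm c) \<and>
     (\<forall>j. unit_seq j \<in> \<Theta>) \<and>
     (\<forall>c\<in>\<Theta>. \<exists>!\<alpha>. (\<lambda>n. nm (seq_diff c (seq_partial \<alpha> n))) \<longlonglongrightarrow> 0)"

text \<open>Continuous linear functionals on the Fr\'echet space \<open>X_F\<close> whose topology
  is given by the increasing norms \<open>nX s\<close>.\<close>
definition F_dual :: "'v::real_vector set \<Rightarrow> (nat \<Rightarrow> 'v \<Rightarrow> real) \<Rightarrow> ('v \<Rightarrow> real) \<Rightarrow> bool" where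
  "F_dual XF nX \<phi> \<longleftrightarrow>
     (\<forall>f\<in>XF. \<forall>h\<in>XF. \<phi> (f + h) = \<phi> f + \<phi> h) \<and>
     (\<forall>f\<in>XF. \<forall>r. \<phi> (r *\<^sub>R f) = r * \<phi> f) \<and>
     (\<exists>s C. \<forall>f\<in>XF. \<bar>\<phi> f\<bar> \<le> C * nX s f)"

definition pre_F_frame ::
  "'v::real_vector set \<Rightarrow> (nat \<Rightarrow> 'v \<Rightarrow> real) \<Rightarrow> (nat \<Rightarrow> real) set
   \<Rightarrow> (nat \<Rightarrow> (nat \<Rightarrow> real) \<Rightarrow> real) \<Rightarrow> (nat \<Rightarrow> 'v \<Rightarrow> real) \<Rightarrow> bool" where
  "pre_F_frame XF nX \<Theta>F n\<Theta> g \<longleftrightarrow>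
     (\<forall>i. F_dual XF nX (g i)) \<and>
     (\<forall>f\<in>XF. (\<lambda>i. g i f) \<in> \<Theta>F) \<and>
     (\<forall>s. \<exists>A B. 0 < A \<and> A \<le> B \<and>
        (\<forall>f\<in>XF. A * nX s f \<le> n\<Theta> s (\<lambda>i. g i f) \<and> n\<Theta> s (\<lambda>i. g i f) \<le> B * nX s f))"

definition tight_pre_F_frame ::
  "'v::real_vector set \<Rightarrow> (nat \<Rightarrow> 'v \<Rightarrow> real) \<Rightarrow> (nat \<Rightarrow> real) set
   \<Rightarrow> (nat \<Rightarrow> (nat \<Rightarrow> real) \<Rightarrow> real) \<Rightarrow> (nat \<Rightarrow> 'v \<Rightarrow> real) \<Rightarrow> bool" where
  "tight_pre_F_frame XF nX \<Theta>F n\<Theta> g \<longleftrightarrow>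
     pre_F_frame XF nX \<Theta>F n\<Theta> g \<and>
     (\<forall>s. \<exists>A B. 0 < A \<and> A \<le> B \<and> A = B \<and>
        (\<forall>f\<in>XF. A * nX s f \<le> n\<Theta> s (\<lambda>i. g i f) \<and> n\<Theta> s (\<lambda>i. g i f) \<le> B * nX s f))"

definition F_frame ::
  "'v::real_vector set \<Rightarrow> (nat \<Rightarrow> 'v \<Rightarrow> real) \<Rightarrow> (nat \<Rightarrow> real) set
   \<Rightarrow> (nat \<Rightarrow> (nat \<Rightarrow> real) \<Rightarrow> real) \<Rightarrow> (nat \<Rightarrow> 'v \<Rightarrow> real) \<Rightarrow> bool" where
  "F_frame XF nX \<Theta>F n\<Theta> g \<longleftrightarrow>
     pre_F_frame XF nX \<Theta>F n\<Theta> g \<and>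
     (\<exists>V :: (nat \<Rightarrow> real) \<Rightarrow> 'v.
        (\<forall>c\<in>\<Theta>F. V c \<in> XF) \<and>
        (\<forall>c\<in>\<Theta>F. \<forall>d\<in>\<Theta>F. V (seq_add c d) = V c + V d) \<and>
        (\<forall>c\<in>\<Theta>F. \<forall>r. V (seq_scale r c) = r *\<^sub>R V c) \<and>
        (\<forall>s. \<exists>K. \<forall>c\<in>\<Theta>F. nX s (V c) \<le> K * n\<Theta> s c) \<and>
        (\<forall>f\<in>XF. V (\<lambda>i. g i f) = f))"

definition tight_F_frame ::
  "'v::real_vector set \<Rightarrow> (nat \<Rightarrow> 'v \<Rightarrow> real) \<Rightarrow> (nat \<Rightarrow> real) set
   \<Rightarrow> (nat \<Rightarrow> (nat \<Rightarrow> real) \<Rightarrow> real) \<Rightarrow> (nat \<Rightarrow> 'v \<Rightarrow> real) \<Rightarrow> bool" where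
  "tight_F_frame XF nX \<Theta>F n\<Theta> g \<longleftrightarrow>
     tight_pre_F_frame XF nX \<Theta>F n\<Theta> g \<and> F_frame XF nX \<Theta>F n\<Theta> g"

section \<open>The concrete construction (indices i shifted to start at 0)\<close>

text \<open>\<open>a i s\<close> for \<open>s \<ge> 1\<close> are the weights \<open>a_{i+1,s}\<close>; level 0 is the original space.\<close>
definition innerS :: "(nat \<Rightarrow> nat \<Rightarrow> real) \<Rightarrow> (nat \<Rightarrow> 'a::real_inner) \<Rightarrow> nat \<Rightarrow> 'a \<Rightarrow> 'a \<Rightarrow> real" where
  "innerS a e s f h =
     (if s = 0 then inner f h
      else (\<Sum>i. (a i s)\<^sup>2 * inner f (e i) * inner (e i) h))"

definition normS :: "(nat \<Rightarrow> nat \<Rightarrow> real) \<Rightarrow> (nat \<Rightarrow> 'a::real_inner) \<Rightarrow> nat \<Rightarrow> 'a \<Rightarrow> real" where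
  "normS a e s f = sqrt (innerS a e s f f)"

definition XS :: "(nat \<Rightarrow> nat \<Rightarrow> real) \<Rightarrow> (nat \<Rightarrow> 'a::real_inner) \<Rightarrow> nat \<Rightarrow> 'a set" where
  "XS a e s =
     (if s = 0 then UNIV else {f. summable (\<lambda>i. (a i s * inner f (e i))\<^sup>2)})"

definition XF :: "(nat \<Rightarrow> nat \<Rightarrow> real) \<Rightarrow> (nat \<Rightarrow> 'a::real_inner) \<Rightarrow> 'a set" where
  "XF a e = (\<Inter>s. XS a e s)"

text \<open>Block index: functional \<open>i\<close> (0-based) uses basis vector \<open>e (blk k i)\<close>,
  where \<open>k j\<close> is the paper's \<open>k_{j+1}\<close>.\<close>
definition blk :: "(nat \<Rightarrow> nat) \<Rightarrow> nat \<Rightarrow> nat" where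
  "blk k i = (LEAST j. i < k j)"

definition gfun :: "(nat \<Rightarrow> real) \<Rightarrow> (nat \<Rightarrow> 'a::real_inner) \<Rightarrow> (nat \<Rightarrow> nat) \<Rightarrow> nat \<Rightarrow> 'a \<Rightarrow> real" where
  "gfun t e k i f = t i * inner f (e (blk k i))"

definition Mset :: "(nat \<Rightarrow> nat \<Rightarrow> real) \<Rightarrow> (nat \<Rightarrow> 'a::real_inner) \<Rightarrow> (nat \<Rightarrow> real) \<Rightarrow> (nat \<Rightarrow> nat)
    \<Rightarrow> nat \<Rightarrow> (nat \<Rightarrow> real) \<Rightarrow> 'a set" where
  "Mset a e t k s c = {f \<in> XS a e s. \<forall>i. \<bar>c i\<bar> \<le> \<bar>gfun t e k i f\<bar>}"

definition ThetaS :: "(nat \<Rightarrow> nat \<Rightarrow> real) \<Rightarrow> (nat \<Rightarrow> 'a::real_inner) \<Rightarrow> (nat \<Rightarrow> real) \<Rightarrow> (nat \<Rightarrow> nat)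
    \<Rightarrow> nat \<Rightarrow> (nat \<Rightarrow> real) set" where
  "ThetaS a e t k s = {c. Mset a e t k s c \<noteq> {}}"

definition normTh :: "(nat \<Rightarrow> nat \<Rightarrow> real) \<Rightarrow> (nat \<Rightarrow> 'a::real_inner) \<Rightarrow> (nat \<Rightarrow> real) \<Rightarrow> (nat \<Rightarrow> nat)
    \<Rightarrow> nat \<Rightarrow> (nat \<Rightarrow> real) \<Rightarrow> real" where
  "normTh a e t k s c = Inf (normS a e s ` Mset a e t k s c)"

definition ThetaF :: "(nat \<Rightarrow> nat \<Rightarrow> real) \<Rightarrow> (nat \<Rightarrow> 'a::real_inner) \<Rightarrow> (nat \<Rightarrow> real) \<Rightarrow> (nat \<Rightarrow> nat)
    \<Rightarrow> (nat \<Rightarrow> real) set" where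
  "ThetaF a e t k = (\<Inter>s. ThetaS a e t k s)"

end

theory Submission
  imports Defs
begin

text \<open>Both scales are weighted \<open>\<ell>\<^sup>2\<close> spaces in disguise. In the orthonormal basis, \<open>X\<^sub>s\<close> consists
  of the \<open>f\<close> whose coefficients \<open>\<langle>f, e\<^sub>j\<rangle>\<close> are square summable with weights \<open>a\<^sub>j\<^sub>,\<^sub>s\<close>. The
  functional \<open>g\<^sub>i\<close> only sees the coefficient of the block \<open>j\<close> containing \<open>i\<close>, so \<open>f \<in> M\<^sup>c\<^sub>s\<close> iff
  \<open>\<bar>\<langle>f, e\<^sub>j\<rangle>\<bar> \<ge> m\<^sub>j(c)\<close> for every \<open>j\<close>, where \<open>m\<^sub>j(c)\<close> is the maximum of \<open>\<bar>c\<^sub>i\<bar> / \<bar>t\<^sub>i\<bar>\<close> over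
  block \<open>j\<close>. Hence the infimum defining \<open>\<parallel>c\<parallel>\<^sub>s\<close> is attained at \<open>f = \<Sum>\<^sub>j m\<^sub>j(c) e\<^sub>j\<close>, and \<open>\<Theta>\<^sub>s\<close>
  is the weighted \<open>\<ell>\<^sup>2\<close> space of the block maxima \<open>m(c)\<close>. Completeness, nesting and density of
  both scales thus reduce to facts about weighted \<open>\<ell>\<^sup>2\<close>. Since \<open>m\<^sub>j(g(f)) = \<bar>\<langle>f, e\<^sub>j\<rangle>\<bar>\<close>, we get
  \<open>\<parallel>{g\<^sub>i(f)}\<parallel>\<^sub>s = \<parallel>f\<parallel>\<^sub>s\<close>, i.e. tightness with bounds \<open>1\<close>; reading each block at its first index
  gives a reconstruction operator of norm at most \<open>1\<close> on every \<open>\<Theta>\<^sub>s\<close>.\<close>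

section \<open>Real series\<close>

lemma summable_mult_of_summable_squares:
  fixes x y :: "nat \<Rightarrow> real"
  assumes "summable (\<lambda>i. (x i)\<^sup>2)" and "summable (\<lambda>i. (y i)\<^sup>2)"
  shows "summable (\<lambda>i. x i * y i)"
proof (rule summable_comparison_test'[OF summable_add[OF assms]])
  fix n
  have "2 * (\<bar>x n\<bar> * \<bar>y n\<bar>) \<le> (x n)\<^sup>2 + (y n)\<^sup>2"
    using zero_le_power2[of "\<bar>x n\<bar> - \<bar>y n\<bar>"] by (simp add: power2_diff)
  moreover have "0 \<le> \<bar>x n\<bar> * \<bar>y n\<bar>" by simp
  ultimately show "norm (x n * y n) \<le> (x n)\<^sup>2 + (y n)\<^sup>2"
    unfolding real_norm_def abs_mult by linarith
qed

lemma summable_square_add: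
  fixes x y :: "nat \<Rightarrow> real"
  assumes "summable (\<lambda>i. (x i)\<^sup>2)" and "summable (\<lambda>i. (y i)\<^sup>2)"
  shows "summable (\<lambda>i. (x i + y i)\<^sup>2)"
proof -
  have "summable (\<lambda>i. (x i)\<^sup>2 + (y i)\<^sup>2 + 2 * (x i * y i))"
    by (intro summable_add summable_mult summable_mult_of_summable_squares assms)
  then show ?thesis by (simp add: power2_sum mult.assoc)
qed

lemma tendsto_suminf_tail_0:
  fixes x :: "nat \<Rightarrow> real"
  assumes "summable x"
  shows "(\<lambda>n. \<Sum>i. if i < n then 0 else x i) \<longlonglongrightarrow> 0"
proof -
  have "(\<Sum>i. if i < n then 0 else x i) = suminf x - (\<Sum>i<n. x i)" for n
  proof -
    have "(\<lambda>i. if i < n then x i else 0) sums (\<Sum>i<n. x i)"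
      using sums_If_finite_set[of "{..<n}" x] by simp
    from sums_diff[OF summable_sums[OF assms] this] show ?thesis
      by (simp add: sums_iff if_distrib[of "\<lambda>y. x _ - y"] cong: if_cong)
  qed
  moreover have "(\<lambda>n. suminf x - (\<Sum>i<n. x i)) \<longlonglongrightarrow> suminf x - suminf x"
    by (intro tendsto_intros summable_LIMSEQ assms)
  ultimately show ?thesis by simp
qed

text \<open>Fatou's lemma for series of nonnegative terms.\<close>
lemma summable_suminf_le_of_tendsto:
  fixes u :: "nat \<Rightarrow> nat \<Rightarrow> real"
  assumes nonneg: "\<And>m j. 0 \<le> u m j" and summable: "\<And>m. summable (u m)"
    and bound: "\<And>m. m \<ge> N \<Longrightarrow> suminf (u m) \<le> B"
    and lim: "\<And>j. (\<lambda>m. u m j) \<longlonglongrightarrow> v j"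
  shows "summable v" and "suminf v \<le> B"
proof -
  have partial: "(\<Sum>j<M. v j) \<le> B" for M
  proof (rule LIMSEQ_le_const2)
    show "(\<lambda>m. \<Sum>j<M. u m j) \<longlonglongrightarrow> (\<Sum>j<M. v j)"
      by (intro tendsto_sum lim)
    show "\<exists>N. \<forall>m\<ge>N. (\<Sum>j<M. u m j) \<le> B"
      using order_trans[OF sum_le_suminf[OF summable] bound] nonneg by blast
  qed
  have "0 \<le> v j" for j
    by (rule LIMSEQ_le_const[OF lim]) (use nonneg in blast)
  then show "summable v"
    by (rule bounded_imp_summable[where B = B]) (metis partial lessThan_Suc_atMost)
  then show "suminf v \<le> B"
    by (rule suminf_le_const[OF _ partial])
qed

lemma tendsto_Max_finite:
  fixes f :: "nat \<Rightarrow> 'b \<Rightarrow> real"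
  assumes "finite A" and "A \<noteq> {}" and "\<And>i. i \<in> A \<Longrightarrow> (\<lambda>m. f m i) \<longlonglongrightarrow> g i"
  shows "(\<lambda>m. Max (f m ` A)) \<longlonglongrightarrow> Max (g ` A)"
  using assms
proof (induction A rule: finite_ne_induct)
  case (insert x A)
  then show ?case by (simp add: Max_insert tendsto_max)
qed simp

section \<open>Weighted \<open>\<ell>\<^sup>2\<close> sequence spaces\<close>

definition l2_weighted :: "(nat \<Rightarrow> real) \<Rightarrow> (nat \<Rightarrow> real) set" where
  "l2_weighted w = {x. summable (\<lambda>j. (w j * x j)\<^sup>2)}"

definition l2_weighted_norm :: "(nat \<Rightarrow> real) \<Rightarrow> (nat \<Rightarrow> real) \<Rightarrow> real" where
  "l2_weighted_norm w x = sqrt (\<Sum>j. (w j * x j)\<^sup>2)"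

lemma mem_l2_weighted: "x \<in> l2_weighted w \<longleftrightarrow> summable (\<lambda>j. (w j * x j)\<^sup>2)"
  by (simp add: l2_weighted_def)

lemma l2_weighted_norm_nonneg: "x \<in> l2_weighted w \<Longrightarrow> 0 \<le> l2_weighted_norm w x"
  by (simp add: mem_l2_weighted l2_weighted_norm_def suminf_nonneg)

lemma square_weight_le:
  fixes w y z :: real
  assumes "\<bar>y\<bar> \<le> \<bar>z\<bar>"
  shows "(w * y)\<^sup>2 \<le> (w * z)\<^sup>2"
  using assms by (simp add: power_mult_distrib abs_le_square_iff mult_left_mono)

lemma l2_weighted_dominated:
  assumes "x \<in> l2_weighted w" and "\<And>j. \<bar>y j\<bar> \<le> \<bar>x j\<bar>"
  shows "y \<in> l2_weighted w" and "l2_weighted_norm w y \<le> l2_weighted_norm w x"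
proof -
  have le: "(w j * y j)\<^sup>2 \<le> (w j * x j)\<^sup>2" for j
    by (rule square_weight_le[OF assms(2)])
  have x: "summable (\<lambda>j. (w j * x j)\<^sup>2)"
    using assms(1) by (simp add: mem_l2_weighted)
  have y: "summable (\<lambda>j. (w j * y j)\<^sup>2)"
    by (rule summable_comparison_test'[OF x, where N = 0]) (simp add: le)
  then show "y \<in> l2_weighted w" by (simp add: mem_l2_weighted)
  show "l2_weighted_norm w y \<le> l2_weighted_norm w x"
    unfolding l2_weighted_norm_def by (intro real_sqrt_le_mono suminf_le le x y)
qed

lemma l2_weighted_abs:
  "(\<lambda>j. \<bar>x j\<bar>) \<in> l2_weighted w \<longleftrightarrow> x \<in> l2_weighted w"
  "l2_weighted_norm w (\<lambda>j. \<bar>x j\<bar>) = l2_weighted_norm w x"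
  by (simp_all add: mem_l2_weighted l2_weighted_norm_def power_mult_distrib)

lemma l2_weighted_add:
  assumes "x \<in> l2_weighted w" and "y \<in> l2_weighted w"
  shows "(\<lambda>j. x j + y j) \<in> l2_weighted w"
  using summable_square_add[of "\<lambda>j. w j * x j" "\<lambda>j. w j * y j"] assms
  by (simp add: mem_l2_weighted distrib_left)

text \<open>Minkowski's inequality, as the limit of its finite version.\<close>
lemma l2_weighted_norm_triangle:
  assumes "x \<in> l2_weighted w" and "y \<in> l2_weighted w"
  shows "l2_weighted_norm w (\<lambda>j. x j + y j) \<le> l2_weighted_norm w x + l2_weighted_norm w y"
proof -
  have lim: "(\<lambda>n. L2_set (\<lambda>j. w j * z j) {..<n}) \<longlonglongrightarrow> l2_weighted_norm w z"
    if "z \<in> l2_weighted w" for z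
    using that unfolding mem_l2_weighted l2_weighted_norm_def L2_set_def
    by (intro tendsto_real_sqrt summable_LIMSEQ) simp
  have "L2_set (\<lambda>j. w j * (x j + y j)) {..<n}
          \<le> L2_set (\<lambda>j. w j * x j) {..<n} + L2_set (\<lambda>j. w j * y j) {..<n}" for n
    using L2_set_triangle_ineq[of "\<lambda>j. w j * x j" "\<lambda>j. w j * y j"] by (simp add: distrib_left)
  then show ?thesis
    by (intro LIMSEQ_le[OF lim[OF l2_weighted_add[OF assms]] tendsto_add[OF lim lim]] assms) auto
qed

lemma l2_weighted_scale:
  assumes "x \<in> l2_weighted w"
  shows "(\<lambda>j. r * x j) \<in> l2_weighted w"
    and "l2_weighted_norm w (\<lambda>j. r * x j) = \<bar>r\<bar> * l2_weighted_norm w x"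
proof -
  have eq: "(\<lambda>j. (w j * (r * x j))\<^sup>2) = (\<lambda>j. r\<^sup>2 * (w j * x j)\<^sup>2)"
    by (simp add: power_mult_distrib mult_ac)
  have x: "summable (\<lambda>j. (w j * x j)\<^sup>2)"
    using assms by (simp add: mem_l2_weighted)
  show "(\<lambda>j. r * x j) \<in> l2_weighted w"
    unfolding mem_l2_weighted eq using summable_mult[OF x, of "r\<^sup>2"] by simp
  show "l2_weighted_norm w (\<lambda>j. r * x j) = \<bar>r\<bar> * l2_weighted_norm w x"
    unfolding l2_weighted_norm_def eq suminf_mult[OF x] by (simp add: real_sqrt_mult)
qed

lemma l2_weighted_finite_support:
  "(\<And>j. j \<ge> N \<Longrightarrow> x j = 0) \<Longrightarrow> x \<in> l2_weighted w"
  unfolding mem_l2_weighted by (rule summable_finite[of "{..<N}"]) auto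

lemma abs_weighted_le_l2_weighted_norm:
  assumes "x \<in> l2_weighted w"
  shows "\<bar>w j * x j\<bar> \<le> l2_weighted_norm w x"
proof -
  have "(\<Sum>i\<in>{j}. (w i * x i)\<^sup>2) \<le> (\<Sum>i. (w i * x i)\<^sup>2)"
    using assms unfolding mem_l2_weighted by (intro sum_le_suminf) auto
  then show ?thesis
    unfolding l2_weighted_norm_def by (simp add: real_le_rsqrt)
qed

lemma l2_weighted_norm_eq_0D:
  assumes "x \<in> l2_weighted w" and "l2_weighted_norm w x = 0" and "w j \<noteq> 0"
  shows "x j = 0"
  using abs_weighted_le_l2_weighted_norm[OF assms(1), of j] assms(2,3) by simp

lemma l2_weighted_antimono:
  assumes "\<And>j. \<bar>w j\<bar> \<le> \<bar>w' j\<bar>" and "x \<in> l2_weighted w'"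
  shows "x \<in> l2_weighted w" and "l2_weighted_norm w x \<le> l2_weighted_norm w' x"
proof -
  have le: "(w j * x j)\<^sup>2 \<le> (w' j * x j)\<^sup>2" for j
    using square_weight_le[OF assms(1), of "x j"] by (simp add: mult.commute)
  have x: "summable (\<lambda>j. (w' j * x j)\<^sup>2)"
    using assms(2) by (simp add: mem_l2_weighted)
  have "summable (\<lambda>j. (w j * x j)\<^sup>2)"
    by (rule summable_comparison_test'[OF x, where N = 0]) (simp add: le)
  then show "x \<in> l2_weighted w" and "l2_weighted_norm w x \<le> l2_weighted_norm w' x"
    unfolding mem_l2_weighted l2_weighted_norm_def
    by (auto intro!: real_sqrt_le_mono suminf_le le x)
qed

lemma tendsto_l2_weighted_norm_tail:
  assumes "x \<in> l2_weighted w"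
  shows "(\<lambda>n. l2_weighted_norm w (\<lambda>j. if j < n then 0 else x j)) \<longlonglongrightarrow> 0"
proof -
  have "(\<lambda>n. sqrt (\<Sum>j. if j < n then 0 else (w j * x j)\<^sup>2)) \<longlonglongrightarrow> sqrt 0"
    using assms unfolding mem_l2_weighted by (intro tendsto_real_sqrt tendsto_suminf_tail_0)
  moreover have "(w j * (if j < n then 0 else x j))\<^sup>2 = (if j < n then 0 else (w j * x j)\<^sup>2)" for j n
    by simp
  ultimately show ?thesis
    by (simp add: l2_weighted_norm_def)
qed

text \<open>The common core of the completeness proofs for \<open>X\<^sub>s\<close> and \<open>\<Theta>\<^sub>s\<close>: \<open>D n m\<close> stands for the
  coefficients of the difference of the \<open>n\<close>-th and \<open>m\<close>-th terms of a Cauchy sequence.\<close>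
lemma l2_weighted_Cauchy_limit:
  assumes mem: "\<And>n m. D n m \<in> l2_weighted w"
    and lim: "\<And>n j. (\<lambda>m. D n m j) \<longlonglongrightarrow> E n j"
    and Cauchy: "\<And>\<epsilon>. \<epsilon> > 0 \<Longrightarrow> \<exists>N. \<forall>n\<ge>N. \<forall>m\<ge>N. l2_weighted_norm w (D n m) < \<epsilon>"
  shows "\<exists>N. \<forall>n\<ge>N. E n \<in> l2_weighted w"
    and "(\<lambda>n. l2_weighted_norm w (E n)) \<longlonglongrightarrow> 0"
proof -
  have eventually_small: "\<exists>N. \<forall>n\<ge>N. E n \<in> l2_weighted w \<and> l2_weighted_norm w (E n) \<le> \<epsilon>"
    if eps: "\<epsilon> > 0" for \<epsilon>
  proof -
    obtain N where N: "\<And>n m. n \<ge> N \<Longrightarrow> m \<ge> N \<Longrightarrow> l2_weighted_norm w (D n m) < \<epsilon>"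
      using Cauchy[OF eps] by blast
    have "E n \<in> l2_weighted w \<and> l2_weighted_norm w (E n) \<le> \<epsilon>" if n: "n \<ge> N" for n
    proof -
      have bound: "(\<Sum>j. (w j * D n m j)\<^sup>2) \<le> \<epsilon>\<^sup>2" if "m \<ge> N" for m
        using N[OF n that] by (simp add: l2_weighted_norm_def sqrt_le_D less_imp_le)
      have terms: "(\<lambda>m. (w j * D n m j)\<^sup>2) \<longlonglongrightarrow> (w j * E n j)\<^sup>2" for j
        by (intro tendsto_intros lim)
      have summ: "summable (\<lambda>j. (w j * D n m j)\<^sup>2)" for m
        using mem by (simp add: mem_l2_weighted)
      note Fatou = summable_suminf_le_of_tendsto[OF zero_le_power2 summ bound terms]
      show ?thesis
        using Fatou eps by (simp add: mem_l2_weighted l2_weighted_norm_def real_le_lsqrt)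
    qed
    then show ?thesis by blast
  qed
  then show "\<exists>N. \<forall>n\<ge>N. E n \<in> l2_weighted w"
    using zero_less_one by blast
  show "(\<lambda>n. l2_weighted_norm w (E n)) \<longlonglongrightarrow> 0"
  proof (rule LIMSEQ_I)
    fix r :: real assume "r > 0"
    then obtain N where "\<And>n. n \<ge> N \<Longrightarrow> E n \<in> l2_weighted w \<and> l2_weighted_norm w (E n) \<le> r / 2"
      using eventually_small[of "r / 2"] by auto
    then show "\<exists>N. \<forall>n\<ge>N. norm (l2_weighted_norm w (E n) - 0) < r"
      using \<open>r > 0\<close> l2_weighted_norm_nonneg by fastforce
  qed
qed

section \<open>Coordinates with respect to an orthonormal basis\<close>

locale hilbert_basis =
  fixes e :: "nat \<Rightarrow> 'a::{real_inner, complete_space}"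
  assumes orthonormal: "\<And>i j. inner (e i) (e j) = (if i = j then 1 else 0)"
    and complete_basis: "closure (span (range e)) = UNIV"
begin

definition coord :: "'a \<Rightarrow> nat \<Rightarrow> real" where
  "coord f i = inner f (e i)"

lemma coord_add: "coord (f + h) = (\<lambda>i. coord f i + coord h i)"
  by (simp add: coord_def inner_add_left fun_eq_iff)

lemma coord_diff: "coord (f - h) = (\<lambda>i. coord f i - coord h i)"
  by (simp add: coord_def inner_diff_left fun_eq_iff)

lemma coord_scaleR: "coord (r *\<^sub>R f) = (\<lambda>i. r * coord f i)"
  by (simp add: coord_def fun_eq_iff)

lemma coord_basis: "coord (e j) i = (if i = j then 1 else 0)"
  by (simp add: coord_def orthonormal)

lemma abs_coord_le_norm: "\<bar>coord f i\<bar> \<le> norm f"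
proof -
  have "norm (e i) = 1"
    using orthonormal[of i i] by (simp add: norm_eq_sqrt_inner)
  then show ?thesis
    using Cauchy_Schwarz_ineq2[of f "e i"] by (simp add: coord_def)
qed

lemma coord_sum_basis:
  "finite A \<Longrightarrow> coord (\<Sum>i\<in>A. x i *\<^sub>R e i) j = (if j \<in> A then x j else 0)"
  by (simp add: coord_def inner_sum_left orthonormal if_distrib cong: if_cong)

lemma inner_sum_basis_left:
  "inner (\<Sum>i\<in>A. x i *\<^sub>R e i) h = (\<Sum>i\<in>A. x i * coord h i)"
  by (simp add: coord_def inner_sum_left inner_sum_right inner_commute)

lemma norm_sum_basis_square:
  "finite A \<Longrightarrow> (norm (\<Sum>i\<in>A. x i *\<^sub>R e i))\<^sup>2 = (\<Sum>i\<in>A. (x i)\<^sup>2)"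
  unfolding power2_norm_eq_inner inner_sum_basis_left
  by (intro sum.cong) (simp_all add: coord_sum_basis power2_eq_square)

lemma sum_coord_square_le: "(\<Sum>i<n. (coord f i)\<^sup>2) \<le> (norm f)\<^sup>2"
proof -
  let ?P = "\<Sum>i<n. coord f i *\<^sub>R e i"
  have "0 \<le> inner (f - ?P) (f - ?P)" by simp
  also have "\<dots> = (norm f)\<^sup>2 - 2 * inner ?P f + inner ?P ?P"
    by (simp add: inner_diff_left inner_diff_right inner_commute power2_norm_eq_inner)
  also have "inner ?P f = (\<Sum>i<n. (coord f i)\<^sup>2)"
    by (simp add: inner_sum_basis_left power2_eq_square)
  also have "inner ?P ?P = (\<Sum>i<n. (coord f i)\<^sup>2)"
    using norm_sum_basis_square[of "{..<n}" "coord f"] by (simp add: power2_norm_eq_inner)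
  finally show ?thesis by simp
qed

lemma summable_coord_square: "summable (\<lambda>i. (coord f i)\<^sup>2)"
  by (rule bounded_imp_summable[where B = "(norm f)\<^sup>2"])
     (simp, metis sum_coord_square_le lessThan_Suc_atMost)

lemma coord_eq_0_imp_eq_0:
  assumes "\<And>i. coord f i = 0"
  shows "f = 0"
proof -
  have "span (range e) \<subseteq> {h. inner f h = 0}"
    using assms by (intro span_minimal) (auto simp: coord_def subspace_def inner_add_right)
  then have "closure (span (range e)) \<subseteq> {h. inner f h = 0}"
    by (rule closure_minimal) (intro closed_Collect_eq continuous_intros)
  then have "inner f f = 0"
    using complete_basis by blast
  then show "f = 0" by simp
qed

lemma coord_inject: "(\<And>i. coord f i = coord h i) \<Longrightarrow> f = h"
  using coord_eq_0_imp_eq_0[of "f - h"] by (simp add: coord_diff)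

lemma norm_sum_basis_diff_square:
  assumes "n \<le> m"
  shows "(norm ((\<Sum>i<m. x i *\<^sub>R e i) - (\<Sum>i<n. x i *\<^sub>R e i)))\<^sup>2
           = (\<Sum>i<m. (x i)\<^sup>2) - (\<Sum>i<n. (x i)\<^sup>2)"
  using assms norm_sum_basis_square[of "{n..<m}" x]
  by (simp add: sum_diff_nat_ivl[of 0 n m] atLeast0LessThan[symmetric])

lemma summable_scaleR_basis:
  assumes "summable (\<lambda>i. (x i)\<^sup>2)"
  shows "summable (\<lambda>i. x i *\<^sub>R e i)"
proof -
  let ?S = "\<lambda>n. \<Sum>i<n. x i *\<^sub>R e i" and ?T = "\<lambda>n. \<Sum>i<n. (x i)\<^sup>2"
  have "Cauchy ?T"
    using assms by (simp add: summable_iff_convergent Cauchy_convergent_iff)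
  have "Cauchy ?S"
    unfolding Cauchy_iff
  proof (intro allI impI)
    fix \<epsilon> :: real assume "\<epsilon> > 0"
    then obtain M where M: "\<And>m n. m \<ge> M \<Longrightarrow> n \<ge> M \<Longrightarrow> norm (?T m - ?T n) < \<epsilon>\<^sup>2"
      using \<open>Cauchy ?T\<close>[unfolded Cauchy_iff] by (metis zero_less_power)
    have small: "norm (?S m - ?S n) < \<epsilon>" if "m \<ge> M" "n \<ge> M" "n \<le> m" for m n
    proof (rule power_less_imp_less_base)
      show "(norm (?S m - ?S n))\<^sup>2 < \<epsilon>\<^sup>2"
        using M[OF that(1,2)] norm_sum_basis_diff_square[OF that(3), of x] by simp
    qed (use \<open>\<epsilon> > 0\<close> in simp)
    show "\<exists>M. \<forall>m\<ge>M. \<forall>n\<ge>M. norm (?S m - ?S n) < \<epsilon>"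
      using small by (metis nle_le norm_minus_commute)
  qed
  then show ?thesis
    by (simp add: summable_iff_convergent Cauchy_convergent_iff)
qed

lemma coord_suminf:
  assumes "summable (\<lambda>i. (x i)\<^sup>2)"
  shows "coord (\<Sum>i. x i *\<^sub>R e i) j = x j"
proof -
  have "coord (\<Sum>i. x i *\<^sub>R e i) j = (\<Sum>i. coord (x i *\<^sub>R e i) j)"
    unfolding coord_def
    by (rule bounded_linear.suminf[OF bounded_linear_inner_left summable_scaleR_basis[OF assms]])
  also have "\<dots> = (\<Sum>i. if i = j then x i else 0)"
    by (intro suminf_cong) (simp add: coord_scaleR coord_basis)
  also have "\<dots> = x j"
    using sums_single[of j x] by (simp add: sums_iff)
  finally show ?thesis .
qed

lemma basis_expansion: "(\<Sum>i. coord f i *\<^sub>R e i) = f"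
  by (rule coord_inject) (simp add: coord_suminf summable_coord_square)

lemma sums_coord_inner: "(\<lambda>i. coord f i * coord h i) sums inner f h"
proof -
  have "(\<lambda>i. coord f i *\<^sub>R e i) sums f"
    using summable_sums[OF summable_scaleR_basis[OF summable_coord_square]] basis_expansion
    by simp
  from bounded_linear.sums[OF bounded_linear_inner_left this, of h] show ?thesis
    by (simp add: coord_def inner_commute)
qed

end

section \<open>The Hilbert scale \<open>X\<^sub>s\<close>\<close>

locale hilbert_scale = hilbert_basis e for e :: "nat \<Rightarrow> 'a::{real_inner, complete_space}" +
  fixes a :: "nat \<Rightarrow> nat \<Rightarrow> real"
  assumes a_ge_1: "\<And>i s. s \<ge> 1 \<Longrightarrow> 1 \<le> a i s"
    and a_le_Suc: "\<And>i s. s \<ge> 1 \<Longrightarrow> a i s \<le> a i (Suc s)"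
begin

text \<open>Level \<open>0\<close> is \<open>X\<^sub>0\<close> itself, so the values \<open>a i 0\<close> are never used.\<close>
definition weight :: "nat \<Rightarrow> nat \<Rightarrow> real" where
  "weight s i = (if s = 0 then 1 else a i s)"

lemma weight_ge_1: "1 \<le> weight s i"
  using a_ge_1 by (simp add: weight_def)

lemma abs_weight_le_Suc: "\<bar>weight s i\<bar> \<le> \<bar>weight (Suc s) i\<bar>"
proof -
  have "weight s i \<le> weight (Suc s) i"
    using a_le_Suc[of s i] a_ge_1[of "Suc 0" i] by (simp add: weight_def)
  then show ?thesis
    using weight_ge_1[of s i] by simp
qed

lemma abs_le_weighted_norm:
  assumes "x \<in> l2_weighted (weight s)"
  shows "\<bar>x j\<bar> \<le> l2_weighted_norm (weight s) x"
proof -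
  have "\<bar>x j\<bar> \<le> weight s j * \<bar>x j\<bar>"
    using mult_right_mono[OF weight_ge_1[of s j] abs_ge_zero[of "x j"]] by simp
  also have "\<dots> = \<bar>weight s j * x j\<bar>"
    using weight_ge_1[of s j] by (simp add: abs_mult)
  also have "\<dots> \<le> l2_weighted_norm (weight s) x"
    using assms by (rule abs_weighted_le_l2_weighted_norm)
  finally show ?thesis .
qed

lemma XS_eq: "XS a e s = {f. coord f \<in> l2_weighted (weight s)}"
  using summable_coord_square
  by (auto simp: XS_def weight_def mem_l2_weighted coord_def)

lemma innerS_eq: "innerS a e s f h = (\<Sum>i. (weight s i * coord f i) * (weight s i * coord h i))"
  using sums_unique[OF sums_coord_inner[of f h]]
  by (simp add: innerS_def weight_def coord_def power2_eq_square inner_commute[of "e _"] mult_ac)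

lemma normS_eq: "normS a e s f = l2_weighted_norm (weight s) (coord f)"
  by (simp add: normS_def innerS_eq l2_weighted_norm_def power2_eq_square)

lemma normS_0: "normS a e 0 f = norm f"
  by (simp add: normS_def innerS_def norm_eq_sqrt_inner)

lemma abs_weight_0_le: "\<bar>weight 0 j\<bar> \<le> \<bar>weight s j\<bar>"
  using weight_ge_1[of s j] by (simp add: weight_def)

lemma summable_square_if_weighted:
  "x \<in> l2_weighted (weight s) \<Longrightarrow> summable (\<lambda>j. (x j)\<^sup>2)"
  using l2_weighted_antimono(1)[OF abs_weight_0_le[of _ s], of x] by (simp add: mem_l2_weighted weight_def)

lemma norm_le_normS: "f \<in> XS a e s \<Longrightarrow> norm f \<le> normS a e s f"
  using l2_weighted_antimono(2)[OF abs_weight_0_le] by (simp add: normS_0[symmetric] normS_eq XS_eq)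

lemma summable_innerS:
  "f \<in> XS a e s \<Longrightarrow> h \<in> XS a e s \<Longrightarrow>
     summable (\<lambda>i. (weight s i * coord f i) * (weight s i * coord h i))"
  by (intro summable_mult_of_summable_squares) (simp_all add: XS_eq mem_l2_weighted)

lemma summable_innerS_terms:
  assumes "s \<ge> 1" and "f \<in> XS a e s" and "h \<in> XS a e s"
  shows "summable (\<lambda>i. (a i s)\<^sup>2 * inner f (e i) * inner (e i) h)"
proof -
  have "(weight s i * coord f i) * (weight s i * coord h i) = (a i s)\<^sup>2 * inner f (e i) * inner (e i) h"
    for i
    using assms(1) by (simp add: weight_def coord_def power2_eq_square inner_commute[of h])
  then show ?thesis
    using summable_innerS[OF assms(2,3)] by simp
qed

lemma XS_zero: "0 \<in> XS a e s"
  by (simp add: XS_eq mem_l2_weighted coord_def)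

lemma XS_add: "f \<in> XS a e s \<Longrightarrow> h \<in> XS a e s \<Longrightarrow> f + h \<in> XS a e s"
  using l2_weighted_add[of "coord f" "weight s" "coord h"] by (simp add: XS_eq coord_add)

lemma XS_scaleR: "f \<in> XS a e s \<Longrightarrow> r *\<^sub>R f \<in> XS a e s"
  using l2_weighted_scale(1)[of "coord f" "weight s" r] by (simp add: XS_eq coord_scaleR)

lemma XS_diff: "f \<in> XS a e s \<Longrightarrow> h \<in> XS a e s \<Longrightarrow> f - h \<in> XS a e s"
  using XS_add[OF _ XS_scaleR, of f s h "-1"] by simp

lemma XS_complete:
  assumes X: "\<And>n. X n \<in> XS a e s"
    and Cauchy: "\<And>\<epsilon>. \<epsilon> > 0 \<Longrightarrow> \<exists>N. \<forall>m\<ge>N. \<forall>n\<ge>N. normS a e s (X m - X n) < \<epsilon>"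
  shows "\<exists>L\<in>XS a e s. (\<lambda>n. normS a e s (X n - L)) \<longlonglongrightarrow> 0"
proof -
  have diff: "X m - X n \<in> XS a e s" for m n
    by (intro XS_diff X)
  have "Cauchy X"
    unfolding Cauchy_iff
  proof (intro allI impI)
    fix \<epsilon> :: real assume "\<epsilon> > 0"
    then obtain N where "\<forall>m\<ge>N. \<forall>n\<ge>N. normS a e s (X m - X n) < \<epsilon>"
      using Cauchy by blast
    then show "\<exists>N. \<forall>m\<ge>N. \<forall>n\<ge>N. norm (X m - X n) < \<epsilon>"
      using norm_le_normS[OF diff] by (meson order.strict_trans1)
  qed
  then obtain L where "X \<longlonglongrightarrow> L"
    by (auto simp: Cauchy_convergent_iff convergent_def)
  then have lim: "(\<lambda>m. coord (X n - X m) j) \<longlonglongrightarrow> coord (X n - L) j" for n j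
    unfolding coord_def by (intro tendsto_intros)
  have mem: "coord (X n - X m) \<in> l2_weighted (weight s)" for n m
    using diff by (simp add: XS_eq)
  have Cauchy': "\<exists>N. \<forall>n\<ge>N. \<forall>m\<ge>N. l2_weighted_norm (weight s) (coord (X n - X m)) < \<epsilon>"
    if "\<epsilon> > 0" for \<epsilon>
    using Cauchy[OF that] by (simp add: normS_eq)
  note limit = l2_weighted_Cauchy_limit[OF mem lim Cauchy']
  obtain N where "X N - L \<in> XS a e s"
    using limit(1) by (auto simp: XS_eq)
  from XS_diff[OF X[of N] this] have "L \<in> XS a e s"
    by simp
  with limit(2) show ?thesis
    by (auto simp: normS_eq)
qed

lemma hilbert_on_XS: "hilbert_on (XS a e s) (innerS a e s)"
  unfolding hilbert_on_def
proof (intro conjI ballI allI impI)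
  show "subspace (XS a e s)"
    unfolding subspace_def using XS_zero XS_add XS_scaleR by blast
  fix x y z r assume x: "x \<in> XS a e s" and y: "y \<in> XS a e s" and z: "z \<in> XS a e s"
  show "innerS a e s x y = innerS a e s y x"
    by (simp add: innerS_eq mult.commute)
  show "innerS a e s (x + y) z = innerS a e s x z + innerS a e s y z"
    using suminf_add[OF summable_innerS[OF x z] summable_innerS[OF y z]]
    by (simp add: innerS_eq coord_add algebra_simps)
  show "innerS a e s (r *\<^sub>R x) y = r * innerS a e s x y"
    using suminf_mult[OF summable_innerS[OF x y], of r]
    by (simp add: innerS_eq coord_scaleR algebra_simps)
next
  fix x assume x: "x \<in> XS a e s"
  show "0 \<le> innerS a e s x x"
    by (simp add: innerS_eq suminf_nonneg summable_innerS[OF x x])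
  show "x = 0" if "innerS a e s x x = 0"
  proof (rule coord_eq_0_imp_eq_0)
    fix i
    have "l2_weighted_norm (weight s) (coord x) = 0"
      using that by (simp add: normS_def normS_eq[symmetric])
    then show "coord x i = 0"
      using x weight_ge_1[of s i] by (intro l2_weighted_norm_eq_0D) (auto simp: XS_eq)
  qed
next
  fix X :: "nat \<Rightarrow> 'a" assume "(\<forall>n. X n \<in> XS a e s) \<and>
    (\<forall>\<epsilon>>0. \<exists>N. \<forall>m\<ge>N. \<forall>n\<ge>N. sqrt (innerS a e s (X m - X n) (X m - X n)) < \<epsilon>)"
  then show "\<exists>L\<in>XS a e s. (\<lambda>n. sqrt (innerS a e s (X n - L) (X n - L))) \<longlonglongrightarrow> 0"
    using XS_complete[of X] by (simp add: normS_def)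
qed

lemma XS_Suc_subset: "XS a e (Suc s) \<subseteq> XS a e s"
  using l2_weighted_antimono(1)[OF abs_weight_le_Suc] by (auto simp: XS_eq)

lemma normS_le_Suc: "f \<in> XS a e (Suc s) \<Longrightarrow> normS a e s f \<le> normS a e (Suc s) f"
  using l2_weighted_antimono(2)[OF abs_weight_le_Suc] by (simp add: XS_eq normS_eq)

lemma finite_support_in_XF: "(\<And>i. i \<ge> N \<Longrightarrow> coord f i = 0) \<Longrightarrow> f \<in> XF a e"
  by (auto simp: XF_def XS_eq intro: l2_weighted_finite_support)

lemma basis_in_XF: "e j \<in> XF a e"
  by (rule finite_support_in_XF[of "Suc j"]) (simp add: coord_basis)

lemma XF_nontrivial: "XF a e \<noteq> {0}"
  using basis_in_XF[of 0] orthonormal[of 0 0] by force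

lemma XF_dense:
  assumes "f \<in> XS a e s" and "\<epsilon> > 0"
  shows "\<exists>h\<in>XF a e. normS a e s (f - h) < \<epsilon>"
proof -
  define h where "h n = (\<Sum>i<n. coord f i *\<^sub>R e i)" for n
  have h_XF: "h n \<in> XF a e" for n
    by (rule finite_support_in_XF[of n]) (simp add: h_def coord_sum_basis)
  have "coord (f - h n) = (\<lambda>i. if i < n then 0 else coord f i)" for n
    by (simp add: h_def coord_diff coord_sum_basis fun_eq_iff)
  then have "(\<lambda>n. normS a e s (f - h n)) \<longlonglongrightarrow> 0"
    using tendsto_l2_weighted_norm_tail[of "coord f" "weight s"] assms(1)
    by (simp add: normS_eq XS_eq)
  from order_tendstoD(2)[OF this \<open>\<epsilon> > 0\<close>] obtain n where "normS a e s (f - h n) < \<epsilon>"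
    by (auto simp: eventually_sequentially)
  with h_XF show ?thesis
    by blast
qed

end

section \<open>The sequence spaces \<open>\<Theta>\<^sub>s\<close>\<close>

locale block_frame = hilbert_scale e a
  for e :: "nat \<Rightarrow> 'a::{real_inner, complete_space}" and a +
  fixes k :: "nat \<Rightarrow> nat" and t :: "nat \<Rightarrow> real"
  assumes k_pos: "0 < k 0"
    and k_strict_mono: "strict_mono k"
    and t_nonzero: "\<And>i. t i \<noteq> 0"
begin

lemma lt_k_self: "i < k i"
proof (induction i)
  case (Suc i)
  then show ?case
    using strict_monoD[OF k_strict_mono, of i "Suc i"] by simp
qed (use k_pos in simp)

lemma lt_k_blk: "i < k (blk k i)"
  unfolding blk_def using lt_k_self by (rule LeastI)

lemma k_le_if_lt_blk: "j < blk k i \<Longrightarrow> k j \<le> i"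
  unfolding blk_def using not_less_Least by (metis not_less)

lemma blk_le_self: "blk k i \<le> i"
  unfolding blk_def using lt_k_self by (rule Least_le)

lemma blk_mono: "i \<le> i' \<Longrightarrow> blk k i \<le> blk k i'"
  using k_le_if_lt_blk[of "blk k i'" i] lt_k_blk[of i'] by (meson leI le_trans not_less)

lemma lt_blk_if_k_le: "k j \<le> n \<Longrightarrow> j < blk k n"
  using lt_k_blk[of n] strict_mono_less_eq[OF k_strict_mono, of "blk k n" j]
  by (meson leI le_trans not_less)

lemma filterlim_blk_at_top: "filterlim (blk k) at_top sequentially"
  unfolding filterlim_at_top
proof
  fix j
  show "eventually (\<lambda>n. j \<le> blk k n) sequentially"
    by (rule eventually_sequentiallyI[of "k j"]) (simp add: lt_blk_if_k_le less_imp_le)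
qed

definition block_start :: "nat \<Rightarrow> nat" where
  "block_start j = (if j = 0 then 0 else k (j - 1))"

lemma blk_block_start: "blk k (block_start j) = j"
proof (cases j)
  case 0
  then show ?thesis
    unfolding blk_def block_start_def using k_pos by (intro Least_equality) auto
next
  case (Suc j')
  then show ?thesis
    unfolding blk_def block_start_def
    by (intro Least_equality) (simp_all add: strict_mono_less[OF k_strict_mono])
qed

definition block :: "nat \<Rightarrow> nat set" where
  "block j = {i. blk k i = j}"

lemma finite_block: "finite (block j)"
  by (rule finite_subset[of _ "{..<k j}"]) (auto simp: block_def lt_k_blk)

lemma block_start_in_block: "block_start j \<in> block j"
  by (simp add: block_def blk_block_start)

lemma block_nonempty: "block j \<noteq> {}"
  using block_start_in_block by blast

definition block_max :: "(nat \<Rightarrow> real) \<Rightarrow> nat \<Rightarrow> real" where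
  "block_max c j = Max ((\<lambda>i. \<bar>c i\<bar> / \<bar>t i\<bar>) ` block j)"

lemma block_max_le_iff: "block_max c j \<le> r \<longleftrightarrow> (\<forall>i\<in>block j. \<bar>c i\<bar> / \<bar>t i\<bar> \<le> r)"
  by (simp add: block_max_def Max_le_iff finite_block block_nonempty)

lemma block_max_ge: "i \<in> block j \<Longrightarrow> \<bar>c i\<bar> / \<bar>t i\<bar> \<le> block_max c j"
  unfolding block_max_def using finite_block by (intro Max_ge) auto

lemma abs_le_block_max: "\<bar>c i\<bar> \<le> \<bar>t i\<bar> * block_max c (blk k i)"
  using block_max_ge[of i "blk k i" c] t_nonzero[of i]
  by (simp add: block_def divide_le_eq mult.commute)

lemma block_max_nonneg: "0 \<le> block_max c j"
  by (rule order_trans[OF _ block_max_ge[OF block_start_in_block]]) simp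

lemma block_max_le_add:
  assumes "\<And>i. \<bar>x i\<bar> \<le> \<bar>c i\<bar> + \<bar>d i\<bar>"
  shows "block_max x j \<le> block_max c j + block_max d j"
  unfolding block_max_le_iff
proof
  fix i assume i: "i \<in> block j"
  have "\<bar>x i\<bar> / \<bar>t i\<bar> \<le> \<bar>c i\<bar> / \<bar>t i\<bar> + \<bar>d i\<bar> / \<bar>t i\<bar>"
    using assms[of i] by (simp add: add_divide_distrib[symmetric] divide_right_mono)
  also have "\<dots> \<le> block_max c j + block_max d j"
    using i by (intro add_mono block_max_ge)
  finally show "\<bar>x i\<bar> / \<bar>t i\<bar> \<le> block_max c j + block_max d j" .
qed

lemma block_max_scale: "block_max (seq_scale r c) = (\<lambda>j. \<bar>r\<bar> * block_max c j)"
proof -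
  have "(\<lambda>i. \<bar>seq_scale r c i\<bar> / \<bar>t i\<bar>) ` block j = (\<lambda>y. \<bar>r\<bar> * y) ` (\<lambda>i. \<bar>c i\<bar> / \<bar>t i\<bar>) ` block j" for j
    by (simp add: image_image seq_scale_def abs_mult)
  then show ?thesis
    unfolding block_max_def using finite_block block_nonempty
    by (simp add: fun_eq_iff mono_Max_commute[symmetric] mono_def mult_left_mono)
qed

lemma block_max_finite_support:
  assumes "\<And>i. i \<ge> N \<Longrightarrow> c i = 0" and "j \<ge> N"
  shows "block_max c j = 0"
proof -
  have "c i = 0" if "i \<in> block j" for i
    using that assms blk_le_self[of i] by (simp add: block_def)
  then have "block_max c j \<le> 0"
    by (simp add: block_max_le_iff)
  then show ?thesis
    using block_max_nonneg[of c j] by simp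
qed

lemma block_max_gfun: "block_max (\<lambda>i. gfun t e k i f) = (\<lambda>j. \<bar>coord f j\<bar>)"
proof -
  have "(\<lambda>i. \<bar>gfun t e k i f\<bar> / \<bar>t i\<bar>) ` block j = {\<bar>coord f j\<bar>}" for j
    using block_start_in_block t_nonzero by (auto simp: block_def gfun_def coord_def abs_mult)
  then show ?thesis
    by (simp add: block_max_def fun_eq_iff)
qed

lemma tendsto_block_max:
  assumes "\<And>i. (\<lambda>m. c m i) \<longlonglongrightarrow> d i"
  shows "(\<lambda>m. block_max (c m) j) \<longlonglongrightarrow> block_max d j"
  unfolding block_max_def using finite_block block_start_in_block
  by (intro tendsto_Max_finite tendsto_intros assms) (auto simp: t_nonzero)

lemma abs_le_gfun_iff: "\<bar>c i\<bar> \<le> \<bar>gfun t e k i f\<bar> \<longleftrightarrow> \<bar>c i\<bar> / \<bar>t i\<bar> \<le> \<bar>coord f (blk k i)\<bar>"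
  using t_nonzero[of i]
  by (simp add: gfun_def coord_def abs_mult pos_divide_le_eq mult.commute[of "\<bar>t i\<bar>"])

lemma Mset_iff:
  "f \<in> Mset a e t k s c \<longleftrightarrow> f \<in> XS a e s \<and> (\<forall>j. block_max c j \<le> \<bar>coord f j\<bar>)"
proof -
  have "(\<forall>i. \<bar>c i\<bar> \<le> \<bar>gfun t e k i f\<bar>) \<longleftrightarrow> (\<forall>j. block_max c j \<le> \<bar>coord f j\<bar>)"
    unfolding abs_le_gfun_iff block_max_le_iff block_def by blast
  then show ?thesis
    by (simp add: Mset_def)
qed

lemma minimal_element_Mset:
  assumes "block_max c \<in> l2_weighted (weight s)"
  defines "f \<equiv> \<Sum>j. block_max c j *\<^sub>R e j"
  shows "f \<in> Mset a e t k s c" and "normS a e s f = l2_weighted_norm (weight s) (block_max c)"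
proof -
  have "coord f = block_max c"
    using coord_suminf[OF summable_square_if_weighted[OF assms(1)]] by (simp add: f_def fun_eq_iff)
  then show "f \<in> Mset a e t k s c" and "normS a e s f = l2_weighted_norm (weight s) (block_max c)"
    using assms(1) by (simp_all add: Mset_iff XS_eq normS_eq abs_ge_self)
qed

lemma abs_block_max_le_if_Mset:
  assumes "f \<in> Mset a e t k s c"
  shows "coord f \<in> l2_weighted (weight s)" and "\<bar>block_max c j\<bar> \<le> \<bar>coord f j\<bar>"
  using assms block_max_nonneg[of c j] by (simp_all add: Mset_iff XS_eq)

lemma ThetaS_eq: "ThetaS a e t k s = {c. block_max c \<in> l2_weighted (weight s)}"
proof -
  have "block_max c \<in> l2_weighted (weight s)" if "f \<in> Mset a e t k s c" for c f
    using l2_weighted_dominated(1) abs_block_max_le_if_Mset[OF that] by blast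
  moreover have "Mset a e t k s c \<noteq> {}" if "block_max c \<in> l2_weighted (weight s)" for c
    using minimal_element_Mset(1)[OF that] by blast
  ultimately show ?thesis
    unfolding ThetaS_def by blast
qed

lemma normTh_eq:
  assumes "c \<in> ThetaS a e t k s"
  shows "normTh a e t k s c = l2_weighted_norm (weight s) (block_max c)"
  unfolding normTh_def
proof (rule cInf_eq_minimum)
  have "block_max c \<in> l2_weighted (weight s)"
    using assms by (simp add: ThetaS_eq)
  from image_eqI[where f = "normS a e s", OF minimal_element_Mset(2)[OF this, symmetric]
      minimal_element_Mset(1)[OF this]]
  show "l2_weighted_norm (weight s) (block_max c) \<in> normS a e s ` Mset a e t k s c" .
  fix y assume "y \<in> normS a e s ` Mset a e t k s c"
  then obtain f where "f \<in> Mset a e t k s c" and "y = normS a e s f"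
    by blast
  then show "l2_weighted_norm (weight s) (block_max c) \<le> y"
    using l2_weighted_dominated(2)[OF abs_block_max_le_if_Mset] by (simp add: normS_eq)
qed

lemma ThetaS_normTh_le_add:
  assumes c: "c \<in> ThetaS a e t k s" and d: "d \<in> ThetaS a e t k s"
    and dominated: "\<And>i. \<bar>x i\<bar> \<le> \<bar>c i\<bar> + \<bar>d i\<bar>"
  shows "x \<in> ThetaS a e t k s" and "normTh a e t k s x \<le> normTh a e t k s c + normTh a e t k s d"
proof -
  let ?w = "weight s" and ?cd = "\<lambda>j. block_max c j + block_max d j"
  have cd: "?cd \<in> l2_weighted ?w"
    using c d by (simp add: ThetaS_eq l2_weighted_add)
  have dom: "\<bar>block_max x j\<bar> \<le> \<bar>?cd j\<bar>" for j
    using block_max_le_add[of x c d j, OF dominated] block_max_nonneg[of x j] block_max_nonneg[of c j]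
      block_max_nonneg[of d j]
    by simp
  show x: "x \<in> ThetaS a e t k s"
    using l2_weighted_dominated(1)[OF cd dom] by (simp add: ThetaS_eq)
  have "l2_weighted_norm ?w (block_max x) \<le> l2_weighted_norm ?w ?cd"
    using l2_weighted_dominated(2)[OF cd dom] .
  also have "\<dots> \<le> l2_weighted_norm ?w (block_max c) + l2_weighted_norm ?w (block_max d)"
    using c d by (intro l2_weighted_norm_triangle) (simp_all add: ThetaS_eq)
  finally show "normTh a e t k s x \<le> normTh a e t k s c + normTh a e t k s d"
    using c d x by (simp add: normTh_eq)
qed

lemma ThetaS_add: "c \<in> ThetaS a e t k s \<Longrightarrow> d \<in> ThetaS a e t k s \<Longrightarrow> seq_add c d \<in> ThetaS a e t k s"
  by (rule ThetaS_normTh_le_add(1)[of c s d]) (auto simp: seq_add_def abs_triangle_ineq)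

lemma ThetaS_diff: "c \<in> ThetaS a e t k s \<Longrightarrow> d \<in> ThetaS a e t k s \<Longrightarrow> seq_diff c d \<in> ThetaS a e t k s"
  by (rule ThetaS_normTh_le_add(1)[of c s d]) (auto simp: seq_diff_def abs_triangle_ineq4)

lemma normTh_add:
  "c \<in> ThetaS a e t k s \<Longrightarrow> d \<in> ThetaS a e t k s \<Longrightarrow>
     normTh a e t k s (seq_add c d) \<le> normTh a e t k s c + normTh a e t k s d"
  by (rule ThetaS_normTh_le_add(2)[of c s d]) (auto simp: seq_add_def abs_triangle_ineq)

lemma ThetaS_scale: "c \<in> ThetaS a e t k s \<Longrightarrow> seq_scale r c \<in> ThetaS a e t k s"
  using l2_weighted_scale(1)[of "block_max c" "weight s" "\<bar>r\<bar>"]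
  by (simp add: ThetaS_eq block_max_scale)

lemma normTh_scale:
  "c \<in> ThetaS a e t k s \<Longrightarrow> normTh a e t k s (seq_scale r c) = \<bar>r\<bar> * normTh a e t k s c"
  using l2_weighted_scale(2)[of "block_max c" "weight s" "\<bar>r\<bar>"]
  by (simp add: normTh_eq ThetaS_scale) (simp add: ThetaS_eq block_max_scale)

lemma ThetaF_finite_support:
  assumes "\<And>i. i \<ge> N \<Longrightarrow> c i = 0"
  shows "c \<in> ThetaF a e t k"
proof -
  have "block_max c \<in> l2_weighted (weight s)" for s
    using block_max_finite_support[OF assms] by (intro l2_weighted_finite_support[of N])
  then show ?thesis
    by (simp add: ThetaF_def ThetaS_eq)
qed

lemma seq_partial_in_ThetaF: "seq_partial \<alpha> n \<in> ThetaF a e t k"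
  by (rule ThetaF_finite_support[of n]) (simp add: seq_partial_def)

lemma unit_seq_in_ThetaF: "unit_seq j \<in> ThetaF a e t k"
  by (rule ThetaF_finite_support[of "Suc j"]) (simp add: unit_seq_def)

lemma ThetaF_nontrivial: "ThetaF a e t k \<noteq> {seq_zero}"
proof -
  have "unit_seq 0 \<noteq> seq_zero"
    by (simp add: unit_seq_def seq_zero_def fun_eq_iff)
  then show ?thesis
    using unit_seq_in_ThetaF[of 0] by blast
qed

lemma abs_le_normTh: "c \<in> ThetaS a e t k s \<Longrightarrow> \<bar>c i\<bar> \<le> \<bar>t i\<bar> * normTh a e t k s c"
  using abs_le_block_max[of c i] abs_le_weighted_norm[of "block_max c" s "blk k i"]
    block_max_nonneg[of c "blk k i"]
  by (simp add: ThetaS_eq normTh_eq) (meson abs_ge_zero mult_left_mono order_trans)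

lemma normTh_nonneg: "c \<in> ThetaS a e t k s \<Longrightarrow> 0 \<le> normTh a e t k s c"
  by (simp add: ThetaS_eq normTh_eq l2_weighted_norm_nonneg)

lemma seq_zero_in_ThetaS: "seq_zero \<in> ThetaS a e t k s"
  using ThetaF_finite_support[of 0 seq_zero] by (simp add: ThetaF_def seq_zero_def)

lemma normTh_eq_0_iff: "c \<in> ThetaS a e t k s \<Longrightarrow> normTh a e t k s c = 0 \<longleftrightarrow> c = seq_zero"
proof
  assume "c \<in> ThetaS a e t k s" and "normTh a e t k s c = 0"
  then show "c = seq_zero"
    using abs_le_normTh[of c s] by (simp add: fun_eq_iff seq_zero_def)
next
  assume "c = seq_zero"
  moreover have "seq_scale 0 seq_zero = seq_zero"
    by (simp add: seq_scale_def seq_zero_def)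
  ultimately show "normTh a e t k s c = 0"
    using normTh_scale[OF seq_zero_in_ThetaS, of s 0] by simp
qed

lemma ThetaS_Suc_subset: "ThetaS a e t k (Suc s) \<subseteq> ThetaS a e t k s"
  using l2_weighted_antimono(1)[OF abs_weight_le_Suc] by (auto simp: ThetaS_eq)

lemma normTh_le_Suc:
  assumes "c \<in> ThetaS a e t k (Suc s)"
  shows "normTh a e t k s c \<le> normTh a e t k (Suc s) c"
  using assms subsetD[OF ThetaS_Suc_subset assms]
    l2_weighted_antimono(2)[of "weight s" "weight (Suc s)", OF abs_weight_le_Suc]
  by (simp add: normTh_eq ThetaS_eq)

lemma ThetaS_Cauchy_pointwise_limit:
  assumes X: "\<And>n. X n \<in> ThetaS a e t k s"
    and Cauchy: "\<And>\<epsilon>. \<epsilon> > 0 \<Longrightarrow> \<exists>N. \<forall>m\<ge>N. \<forall>n\<ge>N. normTh a e t k s (seq_diff (X m) (X n)) < \<epsilon>"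
  obtains L where "\<And>i. (\<lambda>n. X n i) \<longlonglongrightarrow> L i"
proof -
  have "Cauchy (\<lambda>n. X n i)" for i
    unfolding Cauchy_iff
  proof (intro allI impI)
    fix \<epsilon> :: real assume "\<epsilon> > 0"
    then obtain N where N: "\<forall>m\<ge>N. \<forall>n\<ge>N. normTh a e t k s (seq_diff (X m) (X n)) < \<epsilon> / \<bar>t i\<bar>"
      using Cauchy[of "\<epsilon> / \<bar>t i\<bar>"] t_nonzero[of i] by fastforce
    have "norm (X m i - X n i) < \<epsilon>" if "m \<ge> N" "n \<ge> N" for m n
    proof -
      have "norm (X m i - X n i) \<le> \<bar>t i\<bar> * normTh a e t k s (seq_diff (X m) (X n))"
        using abs_le_normTh[OF ThetaS_diff[OF X X], of m n i] by (simp add: seq_diff_def)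
      also have "\<dots> < \<bar>t i\<bar> * (\<epsilon> / \<bar>t i\<bar>)"
        using N[rule_format, OF that] t_nonzero[of i] by (intro mult_strict_left_mono) auto
      finally show ?thesis
        using t_nonzero[of i] by simp
    qed
    then show "\<exists>N. \<forall>m\<ge>N. \<forall>n\<ge>N. norm (X m i - X n i) < \<epsilon>"
      by blast
  qed
  then have "\<exists>L. \<forall>i. (\<lambda>n. X n i) \<longlonglongrightarrow> L i"
    by (intro choice allI) (simp add: Cauchy_convergent_iff convergent_def)
  with that show ?thesis
    by blast
qed

lemma ThetaS_complete:
  assumes X: "\<And>n. X n \<in> ThetaS a e t k s"
    and Cauchy: "\<And>\<epsilon>. \<epsilon> > 0 \<Longrightarrow> \<exists>N. \<forall>m\<ge>N. \<forall>n\<ge>N. normTh a e t k s (seq_diff (X m) (X n)) < \<epsilon>"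
  shows "\<exists>L\<in>ThetaS a e t k s. (\<lambda>n. normTh a e t k s (seq_diff (X n) L)) \<longlonglongrightarrow> 0"
proof -
  obtain L where L: "\<And>i. (\<lambda>n. X n i) \<longlonglongrightarrow> L i"
    using ThetaS_Cauchy_pointwise_limit[OF X Cauchy] by blast
  have diff: "seq_diff (X m) (X n) \<in> ThetaS a e t k s" for m n
    by (intro ThetaS_diff X)
  have lim: "(\<lambda>m. block_max (seq_diff (X n) (X m)) j) \<longlonglongrightarrow> block_max (seq_diff (X n) L) j" for n j
    unfolding seq_diff_def by (intro tendsto_block_max tendsto_intros L)
  have mem: "block_max (seq_diff (X n) (X m)) \<in> l2_weighted (weight s)" for n m
    using diff by (simp add: ThetaS_eq)
  have Cauchy': "\<exists>N. \<forall>n\<ge>N. \<forall>m\<ge>N. l2_weighted_norm (weight s) (block_max (seq_diff (X n) (X m))) < \<epsilon>"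
    if "\<epsilon> > 0" for \<epsilon>
    using Cauchy[OF that] diff by (simp add: normTh_eq)
  note limit = l2_weighted_Cauchy_limit[OF mem lim Cauchy']
  obtain N where "seq_diff (X N) L \<in> ThetaS a e t k s"
    using limit(1) by (auto simp: ThetaS_eq)
  from ThetaS_diff[OF X[of N] this] have L_mem: "L \<in> ThetaS a e t k s"
    by (simp add: seq_diff_def)
  have eq: "normTh a e t k s (seq_diff (X n) L)
      = l2_weighted_norm (weight s) (block_max (seq_diff (X n) L))" for n
    by (intro normTh_eq ThetaS_diff X L_mem)
  show ?thesis
    using L_mem limit(2)[folded eq] by blast
qed

lemma block_max_truncation:
  "block_max (seq_diff c (seq_partial c n)) j \<le> (if j < blk k n then 0 else block_max c j)"
proof (cases "j < blk k n")
  case True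
  have "i < n" if "i \<in> block j" for i
    using that True blk_mono[of n i] by (cases "i < n") (auto simp: block_def)
  then show ?thesis
    using True by (simp add: block_max_le_iff seq_diff_def seq_partial_def)
next
  case False
  then show ?thesis
    by (simp add: block_max_le_iff seq_diff_def seq_partial_def block_max_ge block_max_nonneg)
qed

lemma tendsto_normTh_truncation:
  assumes "c \<in> ThetaS a e t k s"
  shows "(\<lambda>n. normTh a e t k s (seq_diff c (seq_partial c n))) \<longlonglongrightarrow> 0"
proof (rule tendsto_sandwich)
  let ?tail = "\<lambda>m. l2_weighted_norm (weight s) (\<lambda>j. if j < m then 0 else block_max c j)"
  have c: "block_max c \<in> l2_weighted (weight s)"
    using assms by (simp add: ThetaS_eq)
  have mem: "seq_diff c (seq_partial c n) \<in> ThetaS a e t k s" for n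
    using assms seq_partial_in_ThetaF by (simp add: ThetaS_diff ThetaF_def)
  have tail_mem: "(\<lambda>j. if j < m then 0 else block_max c j) \<in> l2_weighted (weight s)" for m
    using block_max_nonneg by (intro l2_weighted_dominated(1)[OF c]) simp
  have "\<bar>block_max (seq_diff c (seq_partial c n)) j\<bar> \<le> \<bar>if j < blk k n then 0 else block_max c j\<bar>" for n j
    using block_max_truncation[of c n j] block_max_nonneg[of _ j] by simp
  from l2_weighted_dominated(2)[OF tail_mem this]
  have "normTh a e t k s (seq_diff c (seq_partial c n)) \<le> ?tail (blk k n)" for n
    by (simp add: normTh_eq[OF mem])
  then show "\<forall>\<^sub>F n in sequentially. normTh a e t k s (seq_diff c (seq_partial c n)) \<le> ?tail (blk k n)"
    by simp
  show "\<forall>\<^sub>F n in sequentially. 0 \<le> normTh a e t k s (seq_diff c (seq_partial c n))"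
    using normTh_nonneg[OF mem] by simp
  show "(\<lambda>n. ?tail (blk k n)) \<longlonglongrightarrow> 0"
    using filterlim_compose[OF tendsto_l2_weighted_norm_tail[OF c] filterlim_blk_at_top] .
qed simp

lemma ThetaS_expansion_unique:
  assumes c: "c \<in> ThetaS a e t k s"
  shows "\<exists>!\<alpha>. (\<lambda>n. normTh a e t k s (seq_diff c (seq_partial \<alpha> n))) \<longlonglongrightarrow> 0"
proof (rule ex1I[of _ c])
  show "(\<lambda>n. normTh a e t k s (seq_diff c (seq_partial c n))) \<longlonglongrightarrow> 0"
    using tendsto_normTh_truncation[OF c] .
next
  fix \<alpha> assume lim: "(\<lambda>n. normTh a e t k s (seq_diff c (seq_partial \<alpha> n))) \<longlonglongrightarrow> 0"
  show "\<alpha> = c"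
  proof
    fix i
    have mem: "seq_diff c (seq_partial \<alpha> n) \<in> ThetaS a e t k s" for n
      using c seq_partial_in_ThetaF by (simp add: ThetaS_diff ThetaF_def)
    have "\<forall>n\<ge>Suc i. \<bar>c i - \<alpha> i\<bar> \<le> \<bar>t i\<bar> * normTh a e t k s (seq_diff c (seq_partial \<alpha> n))"
    proof (intro allI impI)
      fix n assume "n \<ge> Suc i"
      then show "\<bar>c i - \<alpha> i\<bar> \<le> \<bar>t i\<bar> * normTh a e t k s (seq_diff c (seq_partial \<alpha> n))"
        using abs_le_normTh[OF mem, of n i] by (simp add: seq_diff_def seq_partial_def)
    qed
    moreover have "(\<lambda>n. \<bar>t i\<bar> * normTh a e t k s (seq_diff c (seq_partial \<alpha> n))) \<longlonglongrightarrow> \<bar>t i\<bar> * 0"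
      by (intro tendsto_intros lim)
    ultimately have "\<bar>c i - \<alpha> i\<bar> \<le> \<bar>t i\<bar> * 0"
      using LIMSEQ_le_const by blast
    then show "\<alpha> i = c i"
      by simp
  qed
qed

lemma cb_space_ThetaS: "cb_space (ThetaS a e t k s) (normTh a e t k s)"
proof -
  have "\<forall>X. (\<forall>n. X n \<in> ThetaS a e t k s) \<and>
          (\<forall>\<epsilon>>0. \<exists>N. \<forall>m\<ge>N. \<forall>n\<ge>N. normTh a e t k s (seq_diff (X m) (X n)) < \<epsilon>) \<longrightarrow>
          (\<exists>L\<in>ThetaS a e t k s. (\<lambda>n. normTh a e t k s (seq_diff (X n) L)) \<longlonglongrightarrow> 0)"
    using ThetaS_complete by blast
  moreover have "\<forall>i. \<exists>C. \<forall>c\<in>ThetaS a e t k s. \<bar>c i\<bar> \<le> C * normTh a e t k s c"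
    using abs_le_normTh by blast
  moreover have "unit_seq j \<in> ThetaS a e t k s" for j
    using unit_seq_in_ThetaF by (simp add: ThetaF_def)
  ultimately show ?thesis
    unfolding cb_space_def banach_seq_space_def
    by (intro conjI)
      (auto simp: seq_zero_in_ThetaS ThetaS_add ThetaS_scale normTh_nonneg normTh_eq_0_iff
        normTh_scale normTh_add ThetaS_expansion_unique)
qed

lemma ThetaF_dense:
  assumes "c \<in> ThetaS a e t k s" and "\<epsilon> > 0"
  shows "\<exists>d\<in>ThetaF a e t k. normTh a e t k s (seq_diff c d) < \<epsilon>"
proof -
  from order_tendstoD(2)[OF tendsto_normTh_truncation[OF assms(1)] assms(2)]
  obtain n where "normTh a e t k s (seq_diff c (seq_partial c n)) < \<epsilon>"
    by (auto simp: eventually_sequentially)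
  then show ?thesis
    using seq_partial_in_ThetaF by blast
qed

section \<open>The tight \<open>F\<close>-frame\<close>

lemma gfun_in_ThetaS: "f \<in> XS a e s \<Longrightarrow> (\<lambda>i. gfun t e k i f) \<in> ThetaS a e t k s"
  by (simp add: ThetaS_eq block_max_gfun l2_weighted_abs XS_eq)

lemma normTh_gfun: "f \<in> XS a e s \<Longrightarrow> normTh a e t k s (\<lambda>i. gfun t e k i f) = normS a e s f"
  by (simp add: normTh_eq gfun_in_ThetaS block_max_gfun l2_weighted_abs normS_eq)

lemma F_dual_gfun: "F_dual (XF a e) (normS a e) (gfun t e k i)"
proof -
  have "\<bar>gfun t e k i f\<bar> \<le> \<bar>t i\<bar> * normS a e 0 f" for f
    using abs_coord_le_norm[of f "blk k i"]
    by (simp add: gfun_def coord_def normS_0 abs_mult mult_left_mono)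
  then show ?thesis
    unfolding F_dual_def by (auto simp: gfun_def inner_add_left algebra_simps)
qed

text \<open>A left inverse of the analysis operator: block \<open>j\<close> is read off at its first index.\<close>
definition frame_synthesis :: "(nat \<Rightarrow> real) \<Rightarrow> 'a" where
  "frame_synthesis c = (\<Sum>j. (c (block_start j) / t (block_start j)) *\<^sub>R e j)"

lemma abs_block_start_le_block_max: "\<bar>c (block_start j) / t (block_start j)\<bar> \<le> \<bar>block_max c j\<bar>"
  using block_max_ge[OF block_start_in_block, of c j] block_max_nonneg[of c j]
  by (simp add: abs_divide)

lemma frame_synthesis_bounded:
  assumes "c \<in> ThetaS a e t k s"
  shows "coord (frame_synthesis c) = (\<lambda>j. c (block_start j) / t (block_start j))"
    and "frame_synthesis c \<in> XS a e s"
    and "normS a e s (frame_synthesis c) \<le> normTh a e t k s c"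
proof -
  let ?\<beta> = "\<lambda>j. c (block_start j) / t (block_start j)"
  have c: "block_max c \<in> l2_weighted (weight s)"
    using assms by (simp add: ThetaS_eq)
  note \<beta> = l2_weighted_dominated[OF c abs_block_start_le_block_max]
  show coord: "coord (frame_synthesis c) = ?\<beta>"
    using coord_suminf[OF summable_square_if_weighted[OF \<beta>(1)]]
    by (simp add: frame_synthesis_def fun_eq_iff)
  show "frame_synthesis c \<in> XS a e s"
    using \<beta>(1) by (simp add: XS_eq coord)
  show "normS a e s (frame_synthesis c) \<le> normTh a e t k s c"
    using \<beta>(2) by (simp add: normS_eq coord normTh_eq assms)
qed

lemma frame_synthesis_gfun: "frame_synthesis (\<lambda>i. gfun t e k i f) = f"
  using t_nonzero by (simp add: frame_synthesis_def gfun_def coord_def blk_block_start basis_expansion[unfolded coord_def])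

lemma frame_synthesis_add:
  assumes "c \<in> ThetaS a e t k s" and "d \<in> ThetaS a e t k s"
  shows "frame_synthesis (seq_add c d) = frame_synthesis c + frame_synthesis d"
  using frame_synthesis_bounded(1)[OF ThetaS_add[OF assms]] frame_synthesis_bounded(1)[OF assms(1)]
    frame_synthesis_bounded(1)[OF assms(2)]
  by (intro coord_inject) (simp add: coord_add seq_add_def add_divide_distrib)

lemma frame_synthesis_scale:
  assumes "c \<in> ThetaS a e t k s"
  shows "frame_synthesis (seq_scale r c) = r *\<^sub>R frame_synthesis c"
  using frame_synthesis_bounded(1)[OF ThetaS_scale[OF assms]] frame_synthesis_bounded(1)[OF assms]
  by (intro coord_inject) (simp add: coord_scaleR seq_scale_def)

lemma tight_F_frame_gfun:
  "tight_F_frame (XF a e) (normS a e) (ThetaF a e t k) (normTh a e t k) (gfun t e k)"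
proof -
  have analysis: "(\<lambda>i. gfun t e k i f) \<in> ThetaF a e t k" if "f \<in> XF a e" for f
    using that by (simp add: XF_def ThetaF_def gfun_in_ThetaS)
  have tight: "\<forall>s. \<exists>A B. 0 < A \<and> A \<le> B \<and> A = B \<and> (\<forall>f\<in>XF a e.
      A * normS a e s f \<le> normTh a e t k s (\<lambda>i. gfun t e k i f) \<and>
      normTh a e t k s (\<lambda>i. gfun t e k i f) \<le> B * normS a e s f)"
    by (intro allI exI[of _ 1]) (simp add: XF_def normTh_gfun)
  have pre: "pre_F_frame (XF a e) (normS a e) (ThetaF a e t k) (normTh a e t k) (gfun t e k)"
    unfolding pre_F_frame_def using F_dual_gfun analysis tight by blast
  have "F_frame (XF a e) (normS a e) (ThetaF a e t k) (normTh a e t k) (gfun t e k)"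
    unfolding F_frame_def
  proof (intro conjI pre exI[of _ frame_synthesis] ballI allI)
    fix c d r s assume c: "c \<in> ThetaF a e t k" and d: "d \<in> ThetaF a e t k"
    then have c0: "c \<in> ThetaS a e t k 0" and d0: "d \<in> ThetaS a e t k 0"
      by (simp_all add: ThetaF_def)
    show "frame_synthesis c \<in> XF a e"
      using c frame_synthesis_bounded(2) by (simp add: ThetaF_def XF_def)
    show "frame_synthesis (seq_add c d) = frame_synthesis c + frame_synthesis d"
      using frame_synthesis_add[OF c0 d0] .
    show "frame_synthesis (seq_scale r c) = r *\<^sub>R frame_synthesis c"
      using frame_synthesis_scale[OF c0] .
  next
    fix s
    show "\<exists>K. \<forall>c\<in>ThetaF a e t k. normS a e s (frame_synthesis c) \<le> K * normTh a e t k s c"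
      using frame_synthesis_bounded(3) by (intro exI[of _ 1]) (simp add: ThetaF_def)
  next
    fix f
    show "frame_synthesis (\<lambda>i. gfun t e k i f) = f"
      by (rule frame_synthesis_gfun)
  qed
  then show ?thesis
    unfolding tight_F_frame_def tight_pre_F_frame_def using pre tight by blast
qed

end

theorem proposition5p3:
  fixes e :: "nat \<Rightarrow> 'a::{real_inner, complete_space}"
    and a :: "nat \<Rightarrow> nat \<Rightarrow> real"
    and k :: "nat \<Rightarrow> nat"
    and t :: "nat \<Rightarrow> real"
  assumes orthonormal: "\<And>i j. inner (e i) (e j) = (if i = j then 1 else 0)"
    and complete_basis: "closure (span (range e)) = UNIV"
    and a_ge1: "\<And>i s. s \<ge> 1 \<Longrightarrow> 1 \<le> a i s"
    and a_mono: "\<And>i s. s \<ge> 1 \<Longrightarrow> a i s \<le> a i (Suc s)"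
    and k_pos: "0 < k 0"
    and k_mono: "strict_mono k"
    and t_nz: "\<And>i. t i \<noteq> 0"
  shows
    "(\<forall>s. \<forall>f\<in>XS a e s. \<forall>h\<in>XS a e s. s \<ge> 1 \<longrightarrow>
            summable (\<lambda>i. (a i s)\<^sup>2 * inner f (e i) * inner (e i) h)) \<and>
     (\<forall>s. hilbert_on (XS a e s) (innerS a e s)) \<and>
     XF a e \<noteq> {0} \<and>
     (\<forall>s. XS a e (Suc s) \<subseteq> XS a e s) \<and>
     (\<forall>s. \<forall>f\<in>XS a e (Suc s). normS a e s f \<le> normS a e (Suc s) f) \<and>
     (\<forall>s. \<forall>f\<in>XS a e s. \<forall>\<epsilon>>0. \<exists>h\<in>XF a e. normS a e s (f - h) < \<epsilon>) \<and>
     (\<forall>s. cb_space (ThetaS a e t k s) (normTh a e t k s)) \<and>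
     ThetaF a e t k \<noteq> {seq_zero} \<and>
     (\<forall>s. ThetaS a e t k (Suc s) \<subseteq> ThetaS a e t k s) \<and>
     (\<forall>s. \<forall>c\<in>ThetaS a e t k (Suc s). normTh a e t k s c \<le> normTh a e t k (Suc s) c) \<and>
     (\<forall>s. \<forall>c\<in>ThetaS a e t k s. \<forall>\<epsilon>>0. \<exists>d\<in>ThetaF a e t k.
            normTh a e t k s (seq_diff c d) < \<epsilon>) \<and>
     tight_F_frame (XF a e) (normS a e) (ThetaF a e t k) (normTh a e t k) (gfun t e k)"
proof -
  interpret block_frame e a k t
    by unfold_locales (use orthonormal complete_basis a_ge1 a_mono k_pos k_mono t_nz in auto)
  show ?thesis
    using summable_innerS_terms hilbert_on_XS XF_nontrivial XS_Suc_subset normS_le_Suc XF_dense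
      cb_space_ThetaS ThetaF_nontrivial ThetaS_Suc_subset normTh_le_Suc ThetaF_dense
      tight_F_frame_gfun
    by (intro conjI allI ballI impI summable_innerS_terms) blast+
qed

end
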